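(* Let $G$ be a finite simple graph with a homogeneous set $H$, let $k = \chi(G[H])$, and let $K_k$ be a clique on $k$ vertices disjoint from $G$. Let $g(G,H,K_k)$ be the graph obtained from $G$ by deleting $H$, adding $K_k$, and joining every vertex of $V(G)\setminus H$ that has a neighbor in $H$ to all vertices of $K_k$. Then (i) $\chi(G) = \chi(g(G,H,K_k))$; and (ii) if $G$ contains no induced banner and no induced odd hole, then neither does $g(G,H,K_k)$.
   Context: $\chi$ denotes chromatic number. A set $H \subseteq V(G)$ is homogeneous if $2 \leq |H| < |V(G)|$ and every vertex of $V(G)\setminus H$ is adjacent either to all of $H$ or to none of $H$. A hole is a chordless cycle with at least four vertices; it is odd if it has an odd number of vertices. A banner is a hole on four vertices plus one vertex adjacent to exactly one vertex of that hole. *)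

theory Defs
  imports Main
begin

definition simple_graph :: "'a set \<Rightarrow> ('a \<Rightarrow> 'a \<Rightarrow> bool) \<Rightarrow> bool" where
  "simple_graph V E \<longleftrightarrow> finite V \<and> (\<forall>x y. E x y \<longrightarrow> E y x) \<and> (\<forall>x. \<not> E x x)
     \<and> (\<forall>x y. E x y \<longrightarrow> x \<in> V \<and> y \<in> V)"

text \<open>Proper colourings with colours from {0..<k} of the graph (V,E); for a subset
V of the vertex set of a graph this is a colouring of the induced subgraph on V.\<close>
definition colorable :: "'a set \<Rightarrow> ('a \<Rightarrow> 'a \<Rightarrow> bool) \<Rightarrow> nat \<Rightarrow> bool" where
  "colorable V E k \<longleftrightarrow> (\<exists>c :: 'a \<Rightarrow> nat. (\<forall>x\<in>V. c x < k) \<and>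
      (\<forall>x\<in>V. \<forall>y\<in>V. E x y \<longrightarrow> c x \<noteq> c y))"

definition chi :: "'a set \<Rightarrow> ('a \<Rightarrow> 'a \<Rightarrow> bool) \<Rightarrow> nat" where
  "chi V E = (LEAST k. colorable V E k)"

definition homogeneous :: "'a set \<Rightarrow> ('a \<Rightarrow> 'a \<Rightarrow> bool) \<Rightarrow> 'a set \<Rightarrow> bool" where
  "homogeneous V E H \<longleftrightarrow> H \<subseteq> V \<and> 2 \<le> card H \<and> card H < card V \<and>
     (\<forall>v\<in>V - H. (\<forall>h\<in>H. E v h) \<or> (\<forall>h\<in>H. \<not> E v h))"

definition is_hole :: "'a set \<Rightarrow> ('a \<Rightarrow> 'a \<Rightarrow> bool) \<Rightarrow> 'a list \<Rightarrow> bool" where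
  "is_hole V E vs \<longleftrightarrow> distinct vs \<and> set vs \<subseteq> V \<and> 4 \<le> length vs \<and>
     (\<forall>i<length vs. \<forall>j<length vs.
        E (vs ! i) (vs ! j) \<longleftrightarrow> (j = Suc i mod length vs \<or> i = Suc j mod length vs))"

definition has_odd_hole :: "'a set \<Rightarrow> ('a \<Rightarrow> 'a \<Rightarrow> bool) \<Rightarrow> bool" where
  "has_odd_hole V E \<longleftrightarrow> (\<exists>vs. is_hole V E vs \<and> odd (length vs))"

definition has_banner :: "'a set \<Rightarrow> ('a \<Rightarrow> 'a \<Rightarrow> bool) \<Rightarrow> bool" where
  "has_banner V E \<longleftrightarrow> (\<exists>a b c d e. is_hole V E [a, b, c, d] \<and> e \<in> V \<and>
     e \<notin> {a, b, c, d} \<and> E e a \<and> \<not> E e b \<and> \<not> E e c \<and> \<not> E e d)"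

definition g_vertices :: "'a set \<Rightarrow> 'a set \<Rightarrow> 'a set \<Rightarrow> 'a set" where
  "g_vertices V H K = (V - H) \<union> K"

definition g_edges :: "'a set \<Rightarrow> ('a \<Rightarrow> 'a \<Rightarrow> bool) \<Rightarrow> 'a set \<Rightarrow> 'a set \<Rightarrow> 'a \<Rightarrow> 'a \<Rightarrow> bool" where
  "g_edges V E H K x y \<longleftrightarrow>
     (x \<in> V - H \<and> y \<in> V - H \<and> E x y)
   \<or> (x \<in> K \<and> y \<in> K \<and> x \<noteq> y)
   \<or> (x \<in> V - H \<and> (\<exists>h\<in>H. E x h) \<and> y \<in> K)
   \<or> (y \<in> V - H \<and> (\<exists>h\<in>H. E y h) \<and> x \<in> K)"

end

theory Submission
  imports Defs
begin

text \<open>For colourings, G[H] may be replaced by any graph of the same chromatic number that is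
  joined to the rest of G in the same way: a colouring of G spends at least \<open>\<chi>(G[H])\<close> colours
  on H, which can be given injectively to the clique, and conversely an optimal colouring of
  G[H] folds H homomorphically onto the clique. For the forbidden subgraphs, note that the clique
  meets a triangle-free induced subgraph of g(G,H,K) in at most two vertices; replacing them by a
  vertex of H, or by the two ends of an edge of H (which exists when \<open>\<chi>(G[H]) \<ge> 2\<close>), gives an
  isomorphic induced subgraph of G. Banners and odd holes are triangle-free.\<close>

lemma chi_le: "colorable A F k \<Longrightarrow> chi A F \<le> k"
  unfolding chi_def by (rule Least_le)

lemma colorable_chi: "colorable A F k \<Longrightarrow> colorable A F (chi A F)"
  unfolding chi_def by (rule LeastI)

lemma colorable_card_image:
  assumes "finite A" and "\<forall>x\<in>A. \<forall>y\<in>A. F x y \<longrightarrow> c x \<noteq> (c y :: nat)"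
  shows "colorable A F (card (c ` A))"
proof -
  obtain h where h: "bij_betw h (c ` A) {0..<card (c ` A)}"
    using ex_bij_betw_finite_nat[of "c ` A"] assms(1) by blast
  then have "\<forall>x\<in>A. h (c x) < card (c ` A)"
    and "\<forall>x\<in>A. \<forall>y\<in>A. F x y \<longrightarrow> h (c x) \<noteq> h (c y)"
    using assms(2) by (auto simp: bij_betw_def inj_on_def)
  then show ?thesis unfolding colorable_def by (intro exI[of _ "h \<circ> c"]) auto
qed

lemma colorable_card:
  assumes "finite A" and "\<forall>x. \<not> F x x"
  shows "colorable A F (card A)"
proof -
  obtain h where "bij_betw h A {0..<card A}"
    using ex_bij_betw_finite_nat[of A] assms(1) by blast
  then show ?thesis unfolding colorable_def
    using assms(2) by (intro exI[of _ h]) (auto simp: bij_betw_def inj_on_def)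
qed

lemma colorable_1_if_edgeless:
  assumes "\<forall>x\<in>A. \<forall>y\<in>A. \<not> F x y"
  shows "colorable A F 1"
  unfolding colorable_def using assms by (intro exI[of _ "\<lambda>_. 0"]) auto

lemma colorable_hom:
  assumes maps: "\<pi> ` A \<subseteq> B" and hom: "\<And>x y. x \<in> A \<Longrightarrow> y \<in> A \<Longrightarrow> F x y \<Longrightarrow> G (\<pi> x) (\<pi> y)"
    and "colorable B G k"
  shows "colorable A F k"
proof -
  obtain c where "\<forall>x\<in>B. c x < k" and "\<forall>x\<in>B. \<forall>y\<in>B. G x y \<longrightarrow> c x \<noteq> c y"
    using assms(3) unfolding colorable_def by blast
  then show ?thesis
    unfolding colorable_def using maps hom by (intro exI[of _ "c \<circ> \<pi>"]) (auto simp: image_subset_iff)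
qed

definition triangle_free :: "'a set \<Rightarrow> ('a \<Rightarrow> 'a \<Rightarrow> bool) \<Rightarrow> bool" where
  "triangle_free S F \<longleftrightarrow>
     (\<forall>x\<in>S. \<forall>y\<in>S. \<forall>z\<in>S. F x y \<and> F x z \<and> F y z \<longrightarrow> x = y \<or> x = z \<or> y = z)"

definition induced_embedding ::
    "'a set \<Rightarrow> ('a \<Rightarrow> 'a \<Rightarrow> bool) \<Rightarrow> 'b set \<Rightarrow> ('b \<Rightarrow> 'b \<Rightarrow> bool) \<Rightarrow> ('a \<Rightarrow> 'b) \<Rightarrow> bool" where
  "induced_embedding S F V E f \<longleftrightarrow>
     inj_on f S \<and> f ` S \<subseteq> V \<and> (\<forall>x\<in>S. \<forall>y\<in>S. F x y \<longleftrightarrow> E (f x) (f y))"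

lemma induced_embedding_subset:
  "induced_embedding S F V E f \<Longrightarrow> T \<subseteq> S \<Longrightarrow> induced_embedding T F V E f"
  unfolding induced_embedding_def by (meson inj_on_subset image_mono order_trans subsetD)

lemma cyclic_adjacency_no_triangle:
  assumes "4 \<le> (n::nat)" "i < n" "j < n" "l < n" "i \<noteq> j" "i \<noteq> l" "j \<noteq> l"
    "j = Suc i mod n \<or> i = Suc j mod n"
    "l = Suc i mod n \<or> i = Suc l mod n"
    "l = Suc j mod n \<or> j = Suc l mod n"
  shows False
proof -
  have "Suc m mod n = (if Suc m = n then 0 else Suc m)" if "m < n" for m
    using that by auto
  then show False using assms by (simp split: if_splits) linarith+
qed

lemma is_hole_triangle_free:
  assumes "is_hole W F vs"
  shows "triangle_free (set vs) F"
  unfolding triangle_free_def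
proof (intro ballI impI)
  fix x y z assume "x \<in> set vs" "y \<in> set vs" "z \<in> set vs" and adj: "F x y \<and> F x z \<and> F y z"
  then obtain i j l where "i < length vs" "j < length vs" "l < length vs"
    and "vs ! i = x" "vs ! j = y" "vs ! l = z"
    by (auto simp: in_set_conv_nth)
  moreover have "\<forall>i<length vs. \<forall>j<length vs.
        F (vs ! i) (vs ! j) \<longleftrightarrow> (j = Suc i mod length vs \<or> i = Suc j mod length vs)"
    and "4 \<le> length vs"
    using assms unfolding is_hole_def by blast+
  ultimately show "x = y \<or> x = z \<or> y = z"
    using adj cyclic_adjacency_no_triangle[of "length vs" i j l] by metis
qed

lemma is_hole_map:
  assumes hole: "is_hole W F vs" and f: "induced_embedding (set vs) F V E f"
  shows "is_hole V E (map f vs)"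
proof -
  have "\<forall>i<length vs. \<forall>j<length vs.
        F (vs ! i) (vs ! j) \<longleftrightarrow> (j = Suc i mod length vs \<or> i = Suc j mod length vs)"
    and "4 \<le> length vs" and "distinct vs"
    using hole unfolding is_hole_def by blast+
  moreover have "E (map f vs ! i) (map f vs ! j) \<longleftrightarrow> F (vs ! i) (vs ! j)"
    if "i < length vs" "j < length vs" for i j
    using f that unfolding induced_embedding_def by (simp add: nth_mem)
  ultimately show ?thesis
    using f unfolding is_hole_def induced_embedding_def by (simp add: distinct_map)
qed

lemma banner_triangle_free:
  assumes sym: "\<And>x y. F x y \<Longrightarrow> F y x" and hole: "is_hole W F [a, b, c, d]"
    and "\<not> F e b" "\<not> F e c" "\<not> F e d"
  shows "triangle_free {a, b, c, d, e} F"
proof -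
  have adj: "\<forall>i<4. \<forall>j<4. F ([a, b, c, d] ! i) ([a, b, c, d] ! j) \<longleftrightarrow>
      (j = Suc i mod 4 \<or> i = Suc j mod 4)"
    using hole unfolding is_hole_def by simp
  have "\<not> F a c" "\<not> F b d"
    using adj[rule_format, of 0 2] adj[rule_format, of 1 3] by simp_all
  then show ?thesis
    using assms unfolding triangle_free_def by (auto dest: sym)
qed

lemma has_odd_hole_transfer:
  assumes embeds: "\<And>S. S \<subseteq> W \<Longrightarrow> triangle_free S F \<Longrightarrow> \<exists>f. induced_embedding S F V E f"
    and "has_odd_hole W F"
  shows "has_odd_hole V E"
proof -
  obtain vs where hole: "is_hole W F vs" and "odd (length vs)"
    using assms(2) unfolding has_odd_hole_def by blast
  moreover obtain f where "induced_embedding (set vs) F V E f"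
    using embeds[of "set vs"] hole is_hole_triangle_free unfolding is_hole_def by blast
  ultimately show ?thesis
    unfolding has_odd_hole_def by (intro exI[of _ "map f vs"]) (simp add: is_hole_map)
qed

lemma has_banner_transfer:
  assumes embeds: "\<And>S. S \<subseteq> W \<Longrightarrow> triangle_free S F \<Longrightarrow> \<exists>f. induced_embedding S F V E f"
    and sym: "\<And>x y. F x y \<Longrightarrow> F y x"
    and "has_banner W F"
  shows "has_banner V E"
proof -
  obtain a b c d e where hole: "is_hole W F [a, b, c, d]" and "e \<in> W"
    and e: "e \<notin> {a, b, c, d}" "F e a" "\<not> F e b" "\<not> F e c" "\<not> F e d"
    using assms(3) unfolding has_banner_def by blast
  then have "{a, b, c, d, e} \<subseteq> W" and "triangle_free {a, b, c, d, e} F"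
    using banner_triangle_free[OF sym hole] unfolding is_hole_def by auto
  then obtain f where f: "induced_embedding {a, b, c, d, e} F V E f"
    using embeds by blast
  then have "is_hole V E [f a, f b, f c, f d]"
    using is_hole_map[OF hole] induced_embedding_subset[of _ F V E f "set [a, b, c, d]"] by force
  moreover have "f e \<in> V" "f e \<notin> {f a, f b, f c, f d}"
    "E (f e) (f a)" "\<not> E (f e) (f b)" "\<not> E (f e) (f c)" "\<not> E (f e) (f d)"
    using f e unfolding induced_embedding_def inj_on_def by auto
  ultimately show ?thesis
    unfolding has_banner_def by blast
qed

locale clique_substitution =
  fixes V H K :: "'a set" and E :: "'a \<Rightarrow> 'a \<Rightarrow> bool"
  assumes graph: "simple_graph V E"
    and hom: "homogeneous V E H"
    and finite_K: "finite K" and disjoint: "K \<inter> V = {}" and card_K: "card K = chi H E"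
begin

abbreviation "W \<equiv> g_vertices V H K"
abbreviation "F \<equiv> g_edges V E H K"

lemma sym: "E x y \<Longrightarrow> E y x"
  and irrefl: "\<not> E x x"
  and H_subset: "H \<subseteq> V"
  and finite_H: "finite H"
  and two_le_card_H: "2 \<le> card H"
  using graph hom finite_subset unfolding simple_graph_def homogeneous_def by blast+

lemma adj_all_if_adj_some:
  "x \<in> V - H \<Longrightarrow> h \<in> H \<Longrightarrow> E x h \<Longrightarrow> h' \<in> H \<Longrightarrow> E x h'"
  using hom unfolding homogeneous_def by blast

lemma F_sym: "F x y \<Longrightarrow> F y x"
  unfolding g_edges_def using sym by blast

lemma F_outside_iff: "x \<in> V - H \<Longrightarrow> y \<in> V - H \<Longrightarrow> F x y \<longleftrightarrow> E x y"
  using disjoint unfolding g_edges_def by blast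

lemma F_clique_iff: "k \<in> K \<Longrightarrow> k' \<in> K \<Longrightarrow> F k k' \<longleftrightarrow> k \<noteq> k'"
  using disjoint unfolding g_edges_def by blast

lemma F_clique_outside_iff: "x \<in> V - H \<Longrightarrow> k \<in> K \<Longrightarrow> h \<in> H \<Longrightarrow> F x k \<longleftrightarrow> E x h"
  using disjoint adj_all_if_adj_some unfolding g_edges_def by blast

lemma proper_colouring_extend_to_clique:
  fixes c :: "'a \<Rightarrow> nat"
  assumes c_proper: "\<forall>x\<in>V. \<forall>y\<in>V. E x y \<longrightarrow> c x \<noteq> c y"
    and \<psi>_into: "\<psi> ` K \<subseteq> c ` H" and \<psi>_inj: "inj_on \<psi> K"
  defines "c' \<equiv> \<lambda>x. if x \<in> K then \<psi> x else c x"
  shows "\<forall>x\<in>W. \<forall>y\<in>W. F x y \<longrightarrow> c' x \<noteq> c' y"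
proof (intro ballI impI)
  have outside: "c' x = c x" if "x \<in> V" for x
    using that disjoint unfolding c'_def by auto
  have colour_K: "c' k \<noteq> c' z" if "z \<in> V - H" "k \<in> K" "F z k" for z k
  proof -
    obtain h where "h \<in> H" "c' k = c h"
      using \<psi>_into \<open>k \<in> K\<close> unfolding c'_def by auto
    moreover have "E z h"
      using F_clique_outside_iff that \<open>h \<in> H\<close> by blast
    ultimately show ?thesis
      using c_proper outside that H_subset by (metis DiffD1 subsetD)
  qed
  fix x y assume xy: "x \<in> W" "y \<in> W" "F x y"
  consider "x \<in> V - H" "y \<in> V - H" | "x \<in> K" "y \<in> K" | "x \<in> V - H" "y \<in> K"
    | "x \<in> K" "y \<in> V - H"
    using xy unfolding g_vertices_def by blast
  then show "c' x \<noteq> c' y"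
  proof cases
    case 1
    then show ?thesis
      using xy c_proper outside F_outside_iff by (metis DiffD1)
  next
    case 2
    then show ?thesis
      using xy \<psi>_inj F_clique_iff unfolding c'_def inj_on_def by auto
  next
    case 3
    then show ?thesis
      using colour_K xy by metis
  next
    case 4
    then show ?thesis
      using colour_K xy F_sym by metis
  qed
qed

lemma colorable_g_if_colorable:
  assumes "colorable V E k"
  shows "colorable W F k"
proof -
  obtain c where c_lt: "\<forall>x\<in>V. c x < k" and c_proper: "\<forall>x\<in>V. \<forall>y\<in>V. E x y \<longrightarrow> c x \<noteq> c y"
    using assms unfolding colorable_def by blast
  have "colorable H E (card (c ` H))"
    using colorable_card_image[OF finite_H] c_proper H_subset by blast
  then have "card K \<le> card (c ` H)"
    using card_K chi_le by metis
  then obtain \<psi> where \<psi>_into: "\<psi> ` K \<subseteq> c ` H" and \<psi>_inj: "inj_on \<psi> K"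
    using card_le_inj finite_K finite_H by blast
  let ?c' = "\<lambda>x. if x \<in> K then \<psi> x else c x"
  have "?c' x < k" if "x \<in> W" for x
  proof (cases "x \<in> K")
    case True
    then show ?thesis
      using \<psi>_into c_lt H_subset by fastforce
  next
    case False
    then show ?thesis
      using that c_lt unfolding g_vertices_def by auto
  qed
  then show ?thesis
    using proper_colouring_extend_to_clique[OF c_proper \<psi>_into \<psi>_inj]
    unfolding colorable_def by (intro exI[of _ ?c']) blast
qed

lemma colorable_if_colorable_g:
  assumes "colorable W F k"
  shows "colorable V E k"
proof -
  have "colorable H E (card K)"
    using colorable_chi[OF colorable_card[OF finite_H]] irrefl card_K by simp
  then obtain d where d_lt: "\<forall>x\<in>H. d x < card K" and d_proper: "\<forall>x\<in>H. \<forall>y\<in>H. E x y \<longrightarrow> d x \<noteq> d y"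
    unfolding colorable_def by blast
  obtain \<beta> where \<beta>: "bij_betw \<beta> {0..<card K} K"
    using ex_bij_betw_nat_finite[OF finite_K] by blast
  define \<pi> where "\<pi> x = (if x \<in> H then \<beta> (d x) else x)" for x
  have \<pi>_H: "\<pi> x \<in> K" "\<And>y. y \<in> H \<Longrightarrow> E x y \<Longrightarrow> \<pi> x \<noteq> \<pi> y" if "x \<in> H" for x
  proof -
    show "\<pi> x \<in> K"
      using that d_lt bij_betwE[OF \<beta>] unfolding \<pi>_def by simp
    fix y assume "y \<in> H" "E x y"
    then show "\<pi> x \<noteq> \<pi> y"
      using that d_lt d_proper inj_onD[OF bij_betw_imp_inj_on[OF \<beta>], of "d x" "d y"]
      unfolding \<pi>_def by auto
  qed
  show ?thesis
  proof (rule colorable_hom[OF _ _ assms])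
    show "\<pi> ` V \<subseteq> W"
      using \<pi>_H unfolding \<pi>_def g_vertices_def by auto
    fix x y assume xy: "x \<in> V" "y \<in> V" "E x y"
    have cross: "F (\<pi> x) (\<pi> y)" if "x \<in> V - H" "y \<in> H" "E x y" for x y
      using that \<pi>_H(1)[of y] F_clique_outside_iff[of x "\<pi> y" y] unfolding \<pi>_def by simp
    show "F (\<pi> x) (\<pi> y)"
    proof (cases "x \<in> H"; cases "y \<in> H")
      assume "x \<in> H" "y \<in> H"
      then show ?thesis
        using xy \<pi>_H F_clique_iff by blast
    next
      assume "x \<in> H" "y \<notin> H"
      then show ?thesis
        using xy cross[of y x] sym F_sym by blast
    next
      assume "x \<notin> H" "y \<in> H"
      then show ?thesis
        using xy cross by blast
    next
      assume "x \<notin> H" "y \<notin> H"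
      then show ?thesis
        using xy F_outside_iff unfolding \<pi>_def by auto
    qed
  qed
qed


lemma induced_embedding_substitute:
  assumes S: "S \<subseteq> W" and \<phi>_H: "\<And>x. x \<in> S \<inter> K \<Longrightarrow> \<phi> x \<in> H"
    and \<phi>_adj: "\<And>x y. x \<in> S \<inter> K \<Longrightarrow> y \<in> S \<inter> K \<Longrightarrow> x \<noteq> y \<Longrightarrow> E (\<phi> x) (\<phi> y)"
  shows "induced_embedding S F V E (\<lambda>x. if x \<in> K then \<phi> x else x)" (is "induced_embedding S F V E ?f")
proof -
  have outside: "x \<in> V - H" if "x \<in> S" "x \<notin> K" for x
    using that S unfolding g_vertices_def by blast
  have clique: "E (\<phi> x) (\<phi> y) \<longleftrightarrow> x \<noteq> y" if "x \<in> S \<inter> K" "y \<in> S \<inter> K" for x y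
    using that \<phi>_adj irrefl by blast
  have "inj_on ?f S"
  proof (rule inj_onI)
    fix x y assume xy: "x \<in> S" "y \<in> S" "?f x = ?f y"
    show "x = y"
    proof (cases "x \<in> K"; cases "y \<in> K")
      assume "x \<in> K" "y \<in> K"
      then show ?thesis
        using xy clique[of x y] irrefl by auto
    qed (use xy outside \<phi>_H in auto)
  qed
  moreover have "?f ` S \<subseteq> V"
    using outside \<phi>_H H_subset by auto
  moreover have "F x y \<longleftrightarrow> E (?f x) (?f y)" if "x \<in> S" "y \<in> S" for x y
  proof (cases "x \<in> K"; cases "y \<in> K")
    assume "x \<in> K" "y \<in> K"
    then show ?thesis
      using that clique F_clique_iff by simp
  next
    assume "x \<in> K" "y \<notin> K"
    then show ?thesis
      using that outside \<phi>_H F_clique_outside_iff[of y x "\<phi> x"] F_sym sym by auto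
  next
    assume "x \<notin> K" "y \<in> K"
    then show ?thesis
      using that outside \<phi>_H F_clique_outside_iff[of x y "\<phi> y"] by auto
  next
    assume "x \<notin> K" "y \<notin> K"
    then show ?thesis
      using that outside F_outside_iff by simp
  qed
  ultimately show ?thesis
    unfolding induced_embedding_def by blast
qed

lemma edge_in_H_if_two_le_card_K:
  assumes "2 \<le> card K"
  obtains h1 h2 where "h1 \<in> H" "h2 \<in> H" "E h1 h2"
proof -
  have "\<not> colorable H E 1"
    using assms card_K chi_le[of H E 1] by linarith
  then have "\<not> (\<forall>x\<in>H. \<forall>y\<in>H. \<not> E x y)"
    using colorable_1_if_edgeless by blast
  then show ?thesis
    using that by blast
qed

lemma triangle_free_embeds:
  assumes S: "S \<subseteq> W" and triangle_free: "triangle_free S F"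
  shows "\<exists>f. induced_embedding S F V E f"
proof (cases "\<exists>a\<in>S \<inter> K. \<exists>b\<in>S \<inter> K. a \<noteq> b")
  case True
  then obtain a b where ab: "a \<in> S \<inter> K" "b \<in> S \<inter> K" "a \<noteq> b"
    by blast
  have two: "x = a \<or> x = b" if "x \<in> S \<inter> K" for x
  proof (rule ccontr)
    assume "\<not> (x = a \<or> x = b)"
    moreover have "F a b \<and> F a x \<and> F b x"
      using F_clique_iff ab that calculation by auto
    ultimately show False
      using triangle_free ab that unfolding triangle_free_def by blast
  qed
  have "2 \<le> card K"
    using ab finite_K card_mono[of K "{a, b}"] by auto
  then obtain h1 h2 where h: "h1 \<in> H" "h2 \<in> H" "E h1 h2"
    by (rule edge_in_H_if_two_le_card_K)
  let ?\<phi> = "\<lambda>x. if x = a then h1 else h2"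
  have "induced_embedding S F V E (\<lambda>x. if x \<in> K then ?\<phi> x else x)"
  proof (rule induced_embedding_substitute[OF S])
    show "?\<phi> x \<in> H" for x
      using h by simp
    fix x y assume "x \<in> S \<inter> K" "y \<in> S \<inter> K" "x \<noteq> y"
    then have "x = a \<and> y = b \<or> x = b \<and> y = a"
      using two by blast
    then show "E (?\<phi> x) (?\<phi> y)"
      using h sym ab(3) by auto
  qed
  then show ?thesis by blast
next
  case False
  obtain h where "h \<in> H"
    using two_le_card_H by fastforce
  then have "induced_embedding S F V E (\<lambda>x. if x \<in> K then h else x)"
    using induced_embedding_substitute[OF S, of "\<lambda>_. h"] False by blast
  then show ?thesis by blast
qed

end

theorem mainTheorem6:
  fixes V H K :: "'a set" and E :: "'a \<Rightarrow> 'a \<Rightarrow> bool"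
  assumes "simple_graph V E"
    and "homogeneous V E H"
    and "finite K" and "K \<inter> V = {}" and "card K = chi H E"
  shows "chi V E = chi (g_vertices V H K) (g_edges V E H K)
    \<and> ((\<not> has_banner V E \<and> \<not> has_odd_hole V E) \<longrightarrow>
        (\<not> has_banner (g_vertices V H K) (g_edges V E H K) \<and>
         \<not> has_odd_hole (g_vertices V H K) (g_edges V E H K)))"
proof -
  interpret clique_substitution V H K E
    using assms by unfold_locales
  have "colorable V E = colorable (g_vertices V H K) (g_edges V E H K)"
    using colorable_g_if_colorable colorable_if_colorable_g by blast
  then have "chi V E = chi (g_vertices V H K) (g_edges V E H K)"
    unfolding chi_def by simp
  moreover have "has_banner (g_vertices V H K) (g_edges V E H K) \<Longrightarrow> has_banner V E"
    using has_banner_transfer triangle_free_embeds F_sym by blast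
  moreover have "has_odd_hole (g_vertices V H K) (g_edges V E H K) \<Longrightarrow> has_odd_hole V E"
    using has_odd_hole_transfer triangle_free_embeds by blast
  ultimately show ?thesis
    by blast
qed

end
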